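(* Assume the setting below and define $$\alpha_{GB+ST}(t)=\max_{0\le j\le N-1}\ \sum_{k=j}^{j+N-1}(L_k+L^G_k)\,C\left\lceil\frac{t-o_{k,j}+L^G_k-L^G_j}{p}\right\rceil,\qquad t\ge0.$$ Then for all $s\in\mathbb R$ and $t\ge0$, $C$ times the Lebesgue measure of $(G\cup S)\cap[s,s+t]$ is at most $\alpha_{GB+ST}(t)$; i.e. $\alpha_{GB+ST}$ is an arrival curve of the credit-frozen part due to ST windows and guard bands.
   Context: Fix an output port with physical link rate $C>0$. Its gate control list (GCL) is periodic with period $p>0$ and contains $N\ge 1$ scheduled-traffic (ST) windows per period. Window $k\in\{0,\dots,N-1\}$ is the interval $[o_k,o_k+L_k)$, where $0\le o_0<o_1<\dots<o_{N-1}<p$, $L_k\ge 0$, $o_k+L_k\le o_{k+1}$ for $k<N-1$ and $o_{N-1}+L_{N-1}\le o_0+p$. Indices are extended to all integers periodically: $o_{k+N}=o_k+p$, $L_{k+N}=L_k$. Relative offsets are $o_{j,i}=o_j-o_i$. Let $S=\bigcup_{k\in\mathbb Z}[o_k,o_k+L_k)$. Guard bands: for each $k$, $L^G_k=\min\{\ell/C,\ o_k-(o_{k-1}+L_{k-1})\}$, where $\ell>0$ is the maximal frame size of the AVB flows of classes $M_1,\dots,M_i$ competing at the port; thus $L^G_{k+N}=L^G_k$ and the guard band of window $k$ is $[o_k-L^G_k,o_k)$. Let $G=\bigcup_{k\in\mathbb Z}[o_k-L^G_k,o_k)$. *)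

theory Defs
  imports "HOL-Analysis.Analysis"
begin

text \<open>Periodic extension of window offsets and lengths to all integer indices:
  o_{k+N} = o_k + p, L_{k+N} = L_k.  The base data are given for indices 0..N-1.\<close>

definition ext_o :: "(nat \<Rightarrow> real) \<Rightarrow> nat \<Rightarrow> real \<Rightarrow> int \<Rightarrow> real" where
  "ext_o off N p k = off (nat (k mod int N)) + real_of_int (k div int N) * p"

definition ext_L :: "(nat \<Rightarrow> real) \<Rightarrow> nat \<Rightarrow> int \<Rightarrow> real" where
  "ext_L L N k = L (nat (k mod int N))"

definition guard_len :: "real \<Rightarrow> real \<Rightarrow> (nat \<Rightarrow> real) \<Rightarrow> (nat \<Rightarrow> real) \<Rightarrow> nat \<Rightarrow> real \<Rightarrow> int \<Rightarrow> real" where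
  "guard_len C ell off L N p k =
     min (ell / C) (ext_o off N p k - (ext_o off N p (k - 1) + ext_L L N (k - 1)))"

definition ST_set :: "(nat \<Rightarrow> real) \<Rightarrow> (nat \<Rightarrow> real) \<Rightarrow> nat \<Rightarrow> real \<Rightarrow> real set" where
  "ST_set off L N p = (\<Union>k::int. {ext_o off N p k ..< ext_o off N p k + ext_L L N k})"

definition GB_set :: "real \<Rightarrow> real \<Rightarrow> (nat \<Rightarrow> real) \<Rightarrow> (nat \<Rightarrow> real) \<Rightarrow> nat \<Rightarrow> real \<Rightarrow> real set" where
  "GB_set C ell off L N p =
     (\<Union>k::int. {ext_o off N p k - guard_len C ell off L N p k ..< ext_o off N p k})"

definition alpha_GBST :: "real \<Rightarrow> real \<Rightarrow> (nat \<Rightarrow> real) \<Rightarrow> (nat \<Rightarrow> real) \<Rightarrow> nat \<Rightarrow> real \<Rightarrow> real \<Rightarrow> real" where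
  "alpha_GBST C ell off L N p t =
     Max ((\<lambda>j::int. \<Sum>k\<in>{j .. j + int N - 1}.
            (ext_L L N k + guard_len C ell off L N p k) * C *
            real_of_int \<lceil>(t - (ext_o off N p k - ext_o off N p j)
                           + guard_len C ell off L N p k - guard_len C ell off L N p j) / p\<rceil>)
          ` {0 ..< int N})"

end

theory Submission
  imports Defs
begin

text \<open>Each guard band ends where its window begins, so \<open>G \<union> S\<close> is the union of the half-open
  intervals \<open>[o\<^sub>k - L\<^sup>G\<^sub>k, o\<^sub>k + L\<^sub>k)\<close>; these are ordered along the line and move by \<open>p\<close> when \<open>k\<close>
  moves by \<open>N\<close>. Sliding the window \<open>[s, s + t]\<close> left until it starts at the left end of the
  first interval reaching past \<open>s\<close> cannot decrease the covered measure, because the stretch slid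
  over is covered. A window starting at the left end \<open>b\<^sub>j\<close> of interval \<open>j\<close> meets the \<open>m\<close>-th
  period translate of interval \<open>k\<close> (\<open>j \<le> k < j + N\<close>) only if that translate starts before the
  window ends, which happens for at most \<open>\<lceil>(t - (b\<^sub>k - b\<^sub>j)) / p\<rceil>\<close> values of \<open>m\<close>, each contributing at most
  \<open>L\<^sub>k + L\<^sup>G\<^sub>k\<close>. Periodicity finally reduces \<open>j\<close> modulo \<open>N\<close>.\<close>

lemma periodic_shift_int:
  fixes f :: "int \<Rightarrow> 'a::ring_1"
  assumes "\<And>k. f (k + n) = f k + c"
  shows "f (k + m * n) = f k + of_int m * c"
proof (induction m rule: int_induct[where k = 0])
  case base
  then show ?case by simp
next
  case (step1 m)
  have "f (k + (m + 1) * n) = f (k + m * n) + c"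
    using assms[of "k + m * n"] by (simp add: algebra_simps)
  then show ?case using step1 by (simp add: algebra_simps)
next
  case (step2 m)
  have "f (k + m * n) = f (k + (m - 1) * n) + c"
    using assms[of "k + (m - 1) * n"] by (simp add: algebra_simps)
  then show ?case using step2 by (simp add: algebra_simps)
qed

lemma sum_int_atLeastAtMost_shift:
  fixes a b d :: int
  shows "(\<Sum>k\<in>{a + d..b + d}. f k) = (\<Sum>k\<in>{a..b}. f (k + d))"
  by (rule sum.reindex_bij_witness[of _ "\<lambda>k. k + d" "\<lambda>k. k - d"]) auto

lemma int_crossing_exists:
  fixes f :: "int \<Rightarrow> real"
  shows "f a \<le> s \<Longrightarrow> s < f (a + int n) \<Longrightarrow> \<exists>k. f (k - 1) \<le> s \<and> s < f k"
proof (induction n)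
  case 0
  then show ?case by simp
next
  case (Suc n)
  show ?case
  proof (cases "s < f (a + int n)")
    case True
    then show ?thesis using Suc by blast
  next
    case False
    then show ?thesis using Suc.prems by (intro exI[of _ "a + int (Suc n)"]) auto
  qed
qed

lemma measure_Int_Icc_shift_left:
  fixes A :: "real set"
  assumes A: "A \<in> sets lebesgue" and "b \<le> s" and "{b..<s} \<subseteq> A" and "0 \<le> t"
  shows "measure lebesgue (A \<inter> {s..s+t}) \<le> measure lebesgue (A \<inter> {b..b+t})"
proof -
  have fm: "A \<inter> {x..y} \<in> fmeasurable lebesgue" for x y
    using fmeasurable_Int_fmeasurable[of "{x..y}" lebesgue A] A by (simp add: Int_commute)
  show ?thesis
  proof (cases "s \<le> b + t")
    case True
    have "measure lebesgue (A \<inter> {s..s+t}) \<le> measure lebesgue ((A \<inter> {s..b+t}) \<union> {b+t..s+t})"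
      using fm by (intro measure_mono_fmeasurable fmeasurable.Un) auto
    also have "\<dots> \<le> measure lebesgue (A \<inter> {s..b+t}) + (s - b)"
      using measure_Un_le[of "A \<inter> {s..b+t}" lebesgue "{b+t..s+t}"] fm \<open>b \<le> s\<close> by auto
    also have "\<dots> = measure lebesgue ({b..<s} \<union> (A \<inter> {s..b+t}))"
    proof -
      have "{b..<s} \<in> fmeasurable lebesgue"
        by (rule fmeasurableI2[of "{b..s}"]) auto
      moreover have "A \<inter> {s..b+t} - {b..<s} = A \<inter> {s..b+t}"
        by auto
      ultimately show ?thesis
        using measure_Un2[of "{b..<s}" lebesgue "A \<inter> {s..b+t}"] fm \<open>b \<le> s\<close> by simp
    qed
    also have "\<dots> \<le> measure lebesgue (A \<inter> {b..b+t})"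
      using assms True fm by (intro measure_mono_fmeasurable fmeasurable.Un) auto
    finally show ?thesis .
  next
    case False
    then have "A \<inter> {b..b+t} = {b..b+t}"
      using assms by auto
    then show ?thesis
      using fm \<open>0 \<le> t\<close> measure_mono_fmeasurable[of "A \<inter> {s..s+t}" "{s..s+t}" lebesgue] by auto
  qed
qed

locale periodic_interval_chain =
  fixes b e :: "int \<Rightarrow> real" and N :: nat and p :: real
  assumes N_pos: "0 < N" and period_pos: "0 < p"
    and start_le_end: "b k \<le> e k"
    and end_le_next_start: "e k \<le> b (k + 1)"
    and start_add_period: "b (k + int N) = b k + p"
    and end_add_period: "e (k + int N) = e k + p"
begin

definition chain_set :: "real set" where
  "chain_set = (\<Union>k. {b k..<e k})"

lemma start_shift: "b (k + m * int N) = b k + of_int m * p"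
  by (rule periodic_shift_int) (rule start_add_period)

lemma end_shift: "e (k + m * int N) = e k + of_int m * p"
  by (rule periodic_shift_int) (rule end_add_period)

lemma start_mono: "i \<le> k \<Longrightarrow> b i \<le> b k"
proof (induction k rule: int_ge_induct)
  case (step k)
  then show ?case using start_le_end[of k] end_le_next_start[of k] by linarith
qed simp

lemma end_le_start: "i < k \<Longrightarrow> e i \<le> b k"
  using end_le_next_start[of i] start_mono[of "i + 1" k] by simp

lemma end_mono: "i \<le> k \<Longrightarrow> e i \<le> e k"
  using end_le_start[of i k] start_le_end[of k] by (cases "i = k") auto

lemma not_in_chain_set_gap:
  assumes "e (k - 1) \<le> x" and "x < b k"
  shows "x \<notin> chain_set"
proof
  assume "x \<in> chain_set"
  then obtain i where i: "b i \<le> x" "x < e i"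
    by (auto simp: chain_set_def)
  show False
  proof (cases "i < k")
    case True
    then show False using end_mono[of i "k - 1"] assms i by linarith
  next
    case False
    then show False using start_mono[of k i] assms i by linarith
  qed
qed

lemma chain_set_lebesgue: "chain_set \<in> sets lebesgue"
  unfolding chain_set_def by (rule sets.countable_UN'') auto

lemma exists_end_crossing: "\<exists>k. e (k - 1) \<le> s \<and> s < e k"
proof -
  define lo where "lo = \<lfloor>(s - e 0) / p\<rfloor>"
  define hi where "hi = lo + 1"
  have "e (lo * int N) \<le> s"
    using end_shift[of 0 lo] period_pos floor_divide_lower[of p "s - e 0"]
    by (simp add: lo_def mult.commute)
  moreover have "s < e (hi * int N)"
    using end_shift[of 0 hi] period_pos floor_divide_upper[of p "s - e 0"]
    by (simp add: hi_def lo_def algebra_simps)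
  moreover have "hi * int N = lo * int N + int N"
    by (simp add: hi_def algebra_simps)
  ultimately show ?thesis
    using int_crossing_exists[of e "lo * int N" s N] by metis
qed

lemma chain_set_Int_Icc_fmeasurable: "chain_set \<inter> {x..y} \<in> fmeasurable lebesgue"
  using fmeasurable_Int_fmeasurable[of "{x..y}" lebesgue chain_set] chain_set_lebesgue
  by (simp add: Int_commute)

lemma measure_window_le_aligned:
  assumes "e (k - 1) \<le> s" and "s < e k" and "0 \<le> t"
  shows "measure lebesgue (chain_set \<inter> {s..s+t}) \<le> measure lebesgue (chain_set \<inter> {b k..b k+t})"
proof (cases "s \<le> b k")
  case True
  have "chain_set \<inter> {s..s+t} \<subseteq> chain_set \<inter> {b k..b k+t}"
  proof
    fix x assume "x \<in> chain_set \<inter> {s..s+t}"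
    moreover have "\<not> x < b k" if "x \<in> chain_set" "s \<le> x"
      using not_in_chain_set_gap[of k x] assms(1) that by linarith
    ultimately show "x \<in> chain_set \<inter> {b k..b k+t}"
      using True by auto
  qed
  then show ?thesis
    using chain_set_Int_Icc_fmeasurable by (intro measure_mono_fmeasurable) auto
next
  case False
  have "{b k..<s} \<subseteq> {b k..<e k}"
    using assms by auto
  then have "{b k..<s} \<subseteq> chain_set"
    unfolding chain_set_def by blast
  then show ?thesis
    using False assms(3) chain_set_lebesgue by (intro measure_Int_Icc_shift_left) auto
qed

text \<open>For \<open>t - (b k - b j) > 0\<close> this is the number of \<open>m \<ge> 0\<close> with \<open>b (k + m * N) < b j + t\<close>.\<close>

definition window_count :: "real \<Rightarrow> int \<Rightarrow> int \<Rightarrow> int" where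
  "window_count t j k = \<lceil>(t - (b k - b j)) / p\<rceil>"

lemma window_count_shift: "window_count t (j + m * int N) (k + m * int N) = window_count t j k"
  by (simp add: window_count_def start_shift)

lemma window_count_nonneg:
  assumes "k < j + int N" and "b k < e k" and "0 \<le> t"
  shows "0 \<le> window_count t j k"
proof -
  have "e k \<le> b j + p"
    using end_le_start[of k "j + int N"] start_add_period[of j] assms(1) by simp
  then have "-1 < (t - (b k - b j)) / p"
    using assms period_pos by (simp add: field_simps)
  then show ?thesis
    by (simp add: window_count_def)
qed

lemma aligned_window_subset:
  "chain_set \<inter> {b j..b j+t} \<subseteq> {b j + t} \<union>
     (\<Union>k\<in>{j..j + int N - 1}. \<Union>m\<in>{..<nat (window_count t j k)}. {b (k + int m * int N)..<e (k + int m * int N)})"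
proof
  fix x assume x: "x \<in> chain_set \<inter> {b j..b j+t}"
  show "x \<in> {b j + t} \<union>
     (\<Union>k\<in>{j..j + int N - 1}. \<Union>m\<in>{..<nat (window_count t j k)}. {b (k + int m * int N)..<e (k + int m * int N)})"
  proof (cases "x = b j + t")
    case False
    then have "x < b j + t" using x by auto
    obtain i where i: "b i \<le> x" "x < e i"
      using x by (auto simp: chain_set_def)
    have "j \<le> i"
    proof (rule ccontr)
      assume "\<not> j \<le> i"
      then have "e i \<le> b j"
        using end_le_start[of i j] by simp
      then show False
        using i x by auto
    qed
    define k where "k = j + (i - j) mod int N"
    define m where "m = nat ((i - j) div int N)"
    have "0 \<le> (i - j) div int N"
      using \<open>j \<le> i\<close> N_pos by (simp add: pos_imp_zdiv_nonneg_iff)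
    then have i_eq: "i = k + int m * int N"
      by (simp add: k_def m_def)
    have k_range: "k \<in> {j..j + int N - 1}"
      using N_pos by (auto simp: k_def)
    have "real m * p < t - (b k - b j)"
      using start_shift[of k "int m"] i_eq i \<open>x < b j + t\<close> by simp
    then have "real m < (t - (b k - b j)) / p"
      using period_pos by (simp add: field_simps)
    then have "int m < window_count t j k"
      unfolding window_count_def by (simp add: less_ceiling_iff)
    then have m_range: "m \<in> {..<nat (window_count t j k)}"
      by simp
    have "x \<in> {b (k + int m * int N)..<e (k + int m * int N)}"
      using i i_eq by simp
    then show ?thesis
      using k_range m_range by (intro UnI2 UN_I)
  qed simp
qed

lemma measure_aligned_window_le:
  assumes "0 \<le> t"
  shows "measure lebesgue (chain_set \<inter> {b j..b j+t}) \<le>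
           (\<Sum>k\<in>{j..j + int N - 1}. (e k - b k) * window_count t j k)"
proof -
  define I where "I k m = {b (k + int m * int N)..<e (k + int m * int N)}" for k m
  define W where "W = (\<Union>k\<in>{j..j + int N - 1}. \<Union>m\<in>{..<nat (window_count t j k)}. I k m)"
  have I_fm: "I k m \<in> fmeasurable lebesgue" for k m
    unfolding I_def by (rule fmeasurableI2[of "{b (k + int m * int N)..e (k + int m * int N)}"]) auto
  have I_measure: "measure lebesgue (I k m) = e k - b k" for k m
    using start_le_end[of k] by (simp add: I_def start_shift end_shift)
  have W_fm: "W \<in> fmeasurable lebesgue"
    unfolding W_def by (intro fmeasurable.finite_UN) (auto simp: I_fm)
  have "{b j + t} \<union> W \<in> fmeasurable lebesgue"
    by (intro fmeasurable.Un W_fm fmeasurableI_null_sets) auto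
  then have "measure lebesgue (chain_set \<inter> {b j..b j+t}) \<le> measure lebesgue ({b j + t} \<union> W)"
    using aligned_window_subset[of j t] chain_set_Int_Icc_fmeasurable
    by (intro measure_mono_fmeasurable) (auto simp: W_def I_def)
  also have "\<dots> \<le> measure lebesgue W"
    using measure_Un_le[of "{b j + t}" lebesgue W] W_fm by auto
  also have "\<dots> \<le> (\<Sum>k\<in>{j..j + int N - 1}. \<Sum>m\<in>{..<nat (window_count t j k)}. measure lebesgue (I k m))"
    unfolding W_def using I_fm
    by (intro order.trans[OF measure_UNION_le] sum_mono measure_UNION_le) (auto intro!: sets.finite_UN)
  also have "\<dots> \<le> (\<Sum>k\<in>{j..j + int N - 1}. (e k - b k) * window_count t j k)"
  proof (intro sum_mono)
    \<comment> \<open>\<open>nat\<close> truncates negative counts, hence the case split on an empty interval.\<close>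
    fix k assume "k \<in> {j..j + int N - 1}"
    then show "(\<Sum>m\<in>{..<nat (window_count t j k)}. measure lebesgue (I k m)) \<le> (e k - b k) * window_count t j k"
      using window_count_nonneg[of k j t] start_le_end[of k] assms
      by (cases "b k < e k") (auto simp: I_measure)
  qed
  finally show ?thesis .
qed

lemma measure_window_le:
  assumes "0 \<le> t"
  shows "\<exists>j\<in>{0..<int N}. measure lebesgue (chain_set \<inter> {s..s+t}) \<le>
           (\<Sum>k\<in>{j..j + int N - 1}. (e k - b k) * window_count t j k)"
proof -
  obtain k0 where k0: "e (k0 - 1) \<le> s" "s < e k0"
    using exists_end_crossing by blast
  define j where "j = k0 mod int N"
  define q where "q = k0 div int N"
  have k0_eq: "k0 = j + q * int N"
    by (simp add: j_def q_def)
  have "measure lebesgue (chain_set \<inter> {s..s+t}) \<le>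
          (\<Sum>k\<in>{k0..k0 + int N - 1}. (e k - b k) * window_count t k0 k)"
    using measure_window_le_aligned[OF k0 assms] measure_aligned_window_le[OF assms, of k0] by linarith
  also have "\<dots> = (\<Sum>k\<in>{j + q * int N..(j + int N - 1) + q * int N}.
                        (e k - b k) * window_count t (j + q * int N) k)"
  proof -
    have "k0 + int N - 1 = (j + int N - 1) + q * int N"
      using k0_eq by linarith
    then show ?thesis
      by (simp only: k0_eq)
  qed
  also have "\<dots> = (\<Sum>k\<in>{j..j + int N - 1}. (e k - b k) * window_count t j k)"
    unfolding sum_int_atLeastAtMost_shift by (simp add: start_shift end_shift window_count_shift)
  finally have "measure lebesgue (chain_set \<inter> {s..s+t}) \<le>
                 (\<Sum>k\<in>{j..j + int N - 1}. (e k - b k) * window_count t j k)" .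
  moreover have "j \<in> {0..<int N}"
    using N_pos by (simp add: j_def)
  ultimately show ?thesis
    by blast
qed

end

lemma ext_o_shift:
  assumes "0 < N"
  shows "ext_o off N p (k + m * int N) = ext_o off N p k + of_int m * p"
  using assms by (simp add: ext_o_def algebra_simps)

lemma ext_L_shift: "ext_L L N (k + m * int N) = ext_L L N k"
  by (simp add: ext_L_def)

lemma guard_len_shift:
  assumes "0 < N"
  shows "guard_len C ell off L N p (k + m * int N) = guard_len C ell off L N p k"
proof -
  have pred: "k + m * int N - 1 = (k - 1) + m * int N"
    by simp
  show ?thesis
    unfolding guard_len_def pred
    using ext_o_shift[OF assms, of off p "k - 1" m] ext_o_shift[OF assms, of off p k m]
      ext_L_shift[of L N "k - 1" m]
    by simp
qed

lemma ext_L_nonneg: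
  assumes "0 < N" and "\<And>k. k < N \<Longrightarrow> 0 \<le> L k"
  shows "0 \<le> ext_L L N k"
  using assms by (simp add: ext_L_def nat_less_iff)

locale gate_control_list =
  fixes C p ell :: real and N :: nat and off L :: "nat \<Rightarrow> real"
  assumes C_pos: "0 < C" and p_pos: "0 < p" and N_ge_1: "1 \<le> N" and ell_pos: "0 < ell"
    and L_nonneg: "\<And>k. k < N \<Longrightarrow> 0 \<le> L k"
    and base_window_le_next: "\<And>k. Suc k < N \<Longrightarrow> off k + L k \<le> off (Suc k)"
    and last_base_window_le_wrap: "off (N - 1) + L (N - 1) \<le> off 0 + p"
begin

abbreviation "ofs \<equiv> ext_o off N p"
abbreviation "len \<equiv> ext_L L N"
abbreviation "guard \<equiv> guard_len C ell off L N p"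

definition frozen_start :: "int \<Rightarrow> real" where
  "frozen_start k = ofs k - guard k"

definition frozen_end :: "int \<Rightarrow> real" where
  "frozen_end k = ofs k + len k"

lemma ofs_base: "0 \<le> r \<Longrightarrow> r < int N \<Longrightarrow> ofs r = off (nat r)"
  by (simp add: ext_o_def)

lemma window_end_le_next_offset: "ofs k + len k \<le> ofs (k + 1)"
proof -
  define r where "r = k mod int N"
  define q where "q = k div int N"
  have r_range: "0 \<le> r" "r < int N"
    using N_ge_1 by (auto simp: r_def)
  have k_eq: "k = r + q * int N"
    by (simp add: r_def q_def)
  have end_k: "ofs k + len k = off (nat r) + L (nat r) + of_int q * p"
    using r_range by (simp add: ext_o_def ext_L_def r_def q_def)
  show ?thesis
  proof (cases "r + 1 < int N")
    case True
    have "ofs (k + 1) = ofs (r + 1) + of_int q * p"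
      using ext_o_shift[of N off p "r + 1" q] N_ge_1 k_eq by (simp add: algebra_simps)
    also have "ofs (r + 1) = off (Suc (nat r))"
      using ofs_base[of "r + 1"] True r_range by (simp add: Suc_nat_eq_nat_zadd1 add.commute)
    finally show ?thesis
      using end_k base_window_le_next[of "nat r"] True r_range by linarith
  next
    case False
    then have r_last: "r = int N - 1"
      using r_range by simp
    then have "k + 1 = 0 + (q + 1) * int N"
      using k_eq by (simp add: algebra_simps)
    then have "ofs (k + 1) = off 0 + of_int q * p + p"
      using ext_o_shift[of N off p 0 "q + 1"] ofs_base[of 0] N_ge_1 by (simp add: algebra_simps)
    moreover have "nat r = N - 1"
      using r_last by simp
    ultimately show ?thesis
      using end_k last_base_window_le_wrap by simp
  qed
qed

lemma guard_nonneg: "0 \<le> guard k"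
  using window_end_le_next_offset[of "k - 1"] ell_pos C_pos by (simp add: guard_len_def)

sublocale periodic_interval_chain frozen_start frozen_end N p
proof
  fix k
  show "frozen_start k \<le> frozen_end k"
    using guard_nonneg[of k] ext_L_nonneg[of N L k] N_ge_1 L_nonneg
    by (simp add: frozen_start_def frozen_end_def)
  have "guard (k + 1) \<le> ofs (k + 1) - (ofs k + len k)"
    by (simp add: guard_len_def)
  then show "frozen_end k \<le> frozen_start (k + 1)"
    by (simp add: frozen_start_def frozen_end_def)
  show "frozen_start (k + int N) = frozen_start k + p"
    using N_ge_1 ext_o_shift[of N off p k 1] guard_len_shift[of N C ell off L p k 1]
    by (simp add: frozen_start_def)
  show "frozen_end (k + int N) = frozen_end k + p"
    using N_ge_1 ext_o_shift[of N off p k 1] ext_L_shift[of L N k 1]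
    by (simp add: frozen_end_def)
qed (use N_ge_1 p_pos in auto)

lemma frozen_union: "GB_set C ell off L N p \<union> ST_set off L N p = chain_set"
proof -
  have "{ofs k - guard k..<ofs k} \<union> {ofs k..<ofs k + len k} = {frozen_start k..<frozen_end k}" for k
    using guard_nonneg[of k] ext_L_nonneg[of N L k] N_ge_1 L_nonneg
    by (auto simp: frozen_start_def frozen_end_def)
  then show ?thesis
    unfolding GB_set_def ST_set_def chain_set_def by blast
qed

lemma alpha_GBST_ge:
  assumes "j \<in> {0..<int N}"
  shows "C * (\<Sum>k\<in>{j..j + int N - 1}. (frozen_end k - frozen_start k) * window_count t j k)
           \<le> alpha_GBST C ell off L N p t"
proof -
  have summand: "C * ((frozen_end k - frozen_start k) * window_count t j k) =
          (len k + guard k) * C * \<lceil>(t - (ofs k - ofs j) + guard k - guard j) / p\<rceil>" for k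
  proof -
    have offset: "t - (frozen_start k - frozen_start j) = t - (ofs k - ofs j) + guard k - guard j"
      by (simp add: frozen_start_def)
    have width: "frozen_end k - frozen_start k = len k + guard k"
      by (simp add: frozen_start_def frozen_end_def)
    show ?thesis
      unfolding window_count_def offset width by simp
  qed
  have "C * (\<Sum>k\<in>{j..j + int N - 1}. (frozen_end k - frozen_start k) * window_count t j k) =
               (\<Sum>k\<in>{j..j + int N - 1}. (len k + guard k) * C *
                  \<lceil>(t - (ofs k - ofs j) + guard k - guard j) / p\<rceil>)"
    unfolding sum_distrib_left summand ..
  also have "\<dots> \<le> alpha_GBST C ell off L N p t"
    unfolding alpha_GBST_def using assms by (intro Max_ge) auto
  finally show ?thesis .
qed

end

theorem lemma2:
  fixes C p ell :: real and N :: nat and off L :: "nat \<Rightarrow> real" and s t :: real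
  assumes "C > 0" and "p > 0" and "N \<ge> 1" and "ell > 0"
    and "0 \<le> off 0"
    and "\<And>k. Suc k < N \<Longrightarrow> off k < off (Suc k)"
    and "off (N - 1) < p"
    and "\<And>k. k < N \<Longrightarrow> L k \<ge> 0"
    and "\<And>k. Suc k < N \<Longrightarrow> off k + L k \<le> off (Suc k)"
    and "off (N - 1) + L (N - 1) \<le> off 0 + p"
    and "t \<ge> 0"
  shows "C * measure lebesgue ((GB_set C ell off L N p \<union> ST_set off L N p) \<inter> {s .. s + t})
           \<le> alpha_GBST C ell off L N p t"
proof -
  interpret gate_control_list C p ell N off L
    using assms by unfold_locales auto
  obtain j where j: "j \<in> {0..<int N}"
    and bound: "measure lebesgue (chain_set \<inter> {s..s+t}) \<le>
                  (\<Sum>k\<in>{j..j + int N - 1}. (frozen_end k - frozen_start k) * window_count t j k)"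
    using measure_window_le[OF \<open>t \<ge> 0\<close>] by blast
  have "C * measure lebesgue (chain_set \<inter> {s..s+t}) \<le>
          C * (\<Sum>k\<in>{j..j + int N - 1}. (frozen_end k - frozen_start k) * window_count t j k)"
    using bound \<open>C > 0\<close> by simp
  also have "\<dots> \<le> alpha_GBST C ell off L N p t"
    using alpha_GBST_ge[OF j] .
  finally show ?thesis
    by (simp add: frozen_union)
qed

end
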